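(* Let $n$ be a non-negative integer and $r,s\in\mathbb{C}\setminus\mathbb{Z}^{-}$ with $s\neq0$ and $r-s\notin\mathbb{Z}^{-}$. Then \[ \sum_{k=0}^{n}(-1)^k2^{2k}\frac{\binom{n+k}{n-k}}{(k+s)\binom{k+r}{k+s}}=\sum_{k=0}^{n}(-1)^{n-k}\frac{\binom{2n+1}{2k+1}}{(n-k+s)\binom{n+r}{n-k+s}}. \]
   Context: $\mathbb{Z}^{-}$ denotes the set of negative integers. Binomial coefficients with complex entries: $\binom{x}{y}=\frac{\Gamma(x+1)}{\Gamma(y+1)\Gamma(x-y+1)}$. *)

theory Defs
  imports "HOL-Analysis.Analysis"
begin

definition cbinom :: "complex \<Rightarrow> complex \<Rightarrow> complex" where
  "cbinom x y = Gamma (x + 1) / (Gamma (y + 1) * Gamma (x - y + 1))"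

definition neg_ints :: "complex set" where
  "neg_ints = {of_int m | m. m < 0}"

end

theory Submission
  imports Defs
begin

(*
  Writing Gamma (z + k) = pochhammer z k * Gamma z turns both sides, up to the common factor
  Gamma s * Gamma d / (Gamma (r + 1) * pochhammer (r + 1) n) with d = r - s + 1, into

    sum_k (-4)^k C(n+k,2k) (s)_k (s+d+k)_(n-k)  =  sum_k (-1)^(n-k) C(2n+1,2k+1) (s)_(n-k) (d)_k.

  Expanding (s+d+k)_(n-k) by the Vandermonde convolution shows that this is the image of the
  polynomial identity

    sum_k C(n+k,2k) (-4y)^k (1+y)^(n-k)  =  sum_j C(2n+1,2j) (-y)^j

  under the linear map y^j |-> (s)_j (d)_(n-j).  The polynomial identity follows, putting
  y = -z^2, a = 1+z, b = 1-z, from (a+b) sum_k C(n+k,2k) ((a-b)^2)^k (ab)^(n-k) = a^(2n+1) + b^(2n+1),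
  which is proved by induction on n together with its companion for a^(2n+2) - b^(2n+2).
*)

definition odd_pow_poly :: "nat \<Rightarrow> 'a \<Rightarrow> 'a \<Rightarrow> 'a::comm_ring_1" where
  "odd_pow_poly n w p = (\<Sum>k\<le>n. of_nat ((n+k) choose (2*k)) * w^k * p^(n-k))"

definition even_pow_poly :: "nat \<Rightarrow> 'a \<Rightarrow> 'a \<Rightarrow> 'a::comm_ring_1" where
  "even_pow_poly n w p = (\<Sum>k\<le>n. of_nat ((n+1+k) choose (2*k+1)) * w^k * p^(n-k))"

lemma even_pow_poly_Suc:
  "even_pow_poly (Suc n) w p = p * even_pow_poly n w p + odd_pow_poly (Suc n) w p"
proof -
  have "even_pow_poly (Suc n) w p
      = (\<Sum>k\<le>Suc n. of_nat ((n+1+k) choose (2*k+1)) * w^k * p^(Suc n-k))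
        + odd_pow_poly (Suc n) w p"
    by (simp add: even_pow_poly_def odd_pow_poly_def sum.distrib[symmetric] algebra_simps)
  also have "(\<Sum>k\<le>Suc n. of_nat ((n+1+k) choose (2*k+1)) * w^k * p^(Suc n-k))
      = p * even_pow_poly n w p"
    by (simp add: even_pow_poly_def sum_distrib_left Suc_diff_le algebra_simps binomial_eq_0)
  finally show ?thesis by simp
qed

lemma odd_pow_poly_Suc:
  "odd_pow_poly (Suc n) w p = p * odd_pow_poly n w p + w * even_pow_poly n w p"
proof -
  have "odd_pow_poly (Suc n) w p
      = p^(Suc n) + (\<Sum>k\<le>n. of_nat ((n+2+k) choose (2*k+2)) * w^(Suc k) * p^(n-k))"
    unfolding odd_pow_poly_def by (subst sum.atMost_Suc_shift) (simp add: algebra_simps)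
  also have "\<dots> = p^(Suc n) + (\<Sum>k\<le>n. of_nat ((n+1+k) choose (2*k+2)) * w^(Suc k) * p^(n-k))
      + w * even_pow_poly n w p"
    by (simp add: even_pow_poly_def sum_distrib_left sum.distrib[symmetric] numeral_2_eq_2
        algebra_simps)
  also have "p^(Suc n) + (\<Sum>k\<le>n. of_nat ((n+1+k) choose (2*k+2)) * w^(Suc k) * p^(n-k))
      = (\<Sum>k\<le>Suc n. of_nat ((n+k) choose (2*k)) * w^k * p^(Suc n-k))"
    by (subst sum.atMost_Suc_shift) (simp add: algebra_simps)
  also have "\<dots> = p * odd_pow_poly n w p"
    by (simp add: odd_pow_poly_def sum_distrib_left Suc_diff_le algebra_simps binomial_eq_0)
  finally show ?thesis .
qed

lemma sum_binomial_even_terms: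
  fixes z :: "'a::comm_ring_1"
  shows "2 * (\<Sum>j\<le>n. of_nat ((2*n+1) choose (2*j)) * z^(2*j)) = (1 + z)^(2*n+1) + (1 - z)^(2*n+1)"
proof -
  have "(1 + z)^(2*n+1) + (1 - z)^(2*n+1)
      = (\<Sum>i\<le>Suc (2*n). of_nat ((2*n+1) choose i) * (z^i + (-z)^i))"
    using binomial_ring[of z 1 "2*n+1"] binomial_ring[of "-z" 1 "2*n+1"]
    by (simp add: add.commute distrib_left sum.distrib)
  also have "\<dots> = (\<Sum>j\<le>n. 2 * (of_nat ((2*n+1) choose (2*j)) * z^(2*j)))"
    by (subst sum.in_pairs_0) (simp add: algebra_simps)
  finally show ?thesis by (simp add: sum_distrib_left)
qed

lemma pow_polys_closed_form:
  fixes a b :: "'a::comm_ring_1"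
  shows "(a + b) * odd_pow_poly n ((a - b)^2) (a * b) = a^(2*n+1) + b^(2*n+1)"
    and "(a + b) * (a - b) * even_pow_poly n ((a - b)^2) (a * b) = a^(2*n+2) - b^(2*n+2)"
proof (induction n)
  case 0
  show "(a + b) * odd_pow_poly 0 ((a - b)^2) (a * b) = a^(2*0+1) + b^(2*0+1)"
    and "(a + b) * (a - b) * even_pow_poly 0 ((a - b)^2) (a * b) = a^(2*0+2) - b^(2*0+2)"
    by (simp_all add: odd_pow_poly_def even_pow_poly_def algebra_simps power2_eq_square)
next
  case (Suc n)
  have "(a + b) * odd_pow_poly (Suc n) ((a - b)^2) (a * b)
      = a * b * ((a + b) * odd_pow_poly n ((a - b)^2) (a * b))
        + (a - b) * ((a + b) * (a - b) * even_pow_poly n ((a - b)^2) (a * b))"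
    by (simp add: odd_pow_poly_Suc algebra_simps power2_eq_square)
  also have "\<dots> = a * b * (a^(2*n+1) + b^(2*n+1)) + (a - b) * (a^(2*n+2) - b^(2*n+2))"
    by (simp only: Suc.IH)
  also have "\<dots> = a^(2*Suc n+1) + b^(2*Suc n+1)"
    by (simp add: algebra_simps)
  finally show odd: "(a + b) * odd_pow_poly (Suc n) ((a - b)^2) (a * b)
      = a^(2*Suc n+1) + b^(2*Suc n+1)" .
  have "(a + b) * (a - b) * even_pow_poly (Suc n) ((a - b)^2) (a * b)
      = a * b * ((a + b) * (a - b) * even_pow_poly n ((a - b)^2) (a * b))
        + (a - b) * ((a + b) * odd_pow_poly (Suc n) ((a - b)^2) (a * b))"
    by (simp add: even_pow_poly_Suc algebra_simps)
  also have "\<dots> = a * b * (a^(2*n+2) - b^(2*n+2)) + (a - b) * (a^(2*Suc n+1) + b^(2*Suc n+1))"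
    by (simp only: Suc.IH odd)
  also have "\<dots> = a^(2*Suc n+2) - b^(2*Suc n+2)"
    by (simp add: algebra_simps)
  finally show "(a + b) * (a - b) * even_pow_poly (Suc n) ((a - b)^2) (a * b)
      = a^(2*Suc n+2) - b^(2*Suc n+2)" .
qed

lemma choose_polynomial_identity:
  fixes y :: complex
  shows "(\<Sum>k\<le>n. of_nat ((n+k) choose (2*k)) * (-4*y)^k * (1+y)^(n-k))
       = (\<Sum>j\<le>n. of_nat ((2*n+1) choose (2*j)) * (-y)^j)"
proof -
  define z where "z = csqrt (-y)"
  have z2: "z^2 = -y" by (simp add: z_def)
  have "((1 + z) - (1 - z))^2 = -4*y" "(1 + z) * (1 - z) = 1 + y"
    using z2 by (simp_all add: algebra_simps power2_eq_square)
  then have "2 * odd_pow_poly n (-4*y) (1+y) = (1 + z)^(2*n+1) + (1 - z)^(2*n+1)"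
    using pow_polys_closed_form(1)[of "1 + z" "1 - z" n] by simp
  also have "\<dots> = 2 * (\<Sum>j\<le>n. of_nat ((2*n+1) choose (2*j)) * (z^2)^j)"
    by (simp only: power_mult[symmetric] sum_binomial_even_terms)
  finally show ?thesis
    by (simp add: odd_pow_poly_def z2 mult.assoc)
qed

lemma sum_shifted_binomial_swap:
  fixes a g :: "nat \<Rightarrow> 'a::comm_semiring_1"
  shows "(\<Sum>k\<le>n. a k * (\<Sum>i\<le>n-k. of_nat ((n-k) choose i) * g (k+i)))
       = (\<Sum>j\<le>n. (\<Sum>k\<le>j. a k * of_nat ((n-k) choose (j-k))) * g j)"
proof -
  have "(\<Sum>k\<le>n. a k * (\<Sum>i\<le>n-k. of_nat ((n-k) choose i) * g (k+i)))
      = (\<Sum>(k,i)\<in>{(k,i). k+i \<le> n}. a k * of_nat ((n-k) choose i) * g (k+i))"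
    by (simp add: pairs_le_eq_Sigma sum.Sigma sum_distrib_left mult.assoc)
  also have "\<dots> = (\<Sum>j\<le>n. \<Sum>k\<le>j. a k * of_nat ((n-k) choose (j-k)) * g (k+(j-k)))"
    by (rule sum.triangle_reindex_eq)
  also have "\<dots> = (\<Sum>j\<le>n. (\<Sum>k\<le>j. a k * of_nat ((n-k) choose (j-k))) * g j)"
    by (auto simp: sum_distrib_right intro!: sum.cong)
  finally show ?thesis .
qed

lemma choose_coefficient_identity:
  assumes "j \<le> n"
  shows "(\<Sum>k\<le>j. (-4)^k * int ((n+k) choose (2*k)) * int ((n-k) choose (j-k)))
       = (-1)^j * int ((2*n+1) choose (2*j))"
proof -
  let ?c = "\<lambda>j. \<Sum>k\<le>j. (-4)^k * of_nat ((n+k) choose (2*k)) * of_nat ((n-k) choose (j-k)) :: complex"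
  have poly_eq: "(\<Sum>j\<le>n. ?c j * y^j) = (\<Sum>j\<le>n. ((-1)^j * of_nat ((2*n+1) choose (2*j))) * y^j)"
    for y :: complex
  proof -
    have "(\<Sum>j\<le>n. ?c j * y^j)
        = (\<Sum>k\<le>n. (-4)^k * of_nat ((n+k) choose (2*k))
              * (\<Sum>i\<le>n-k. of_nat ((n-k) choose i) * y^(k+i)))"
      using sum_shifted_binomial_swap[of "\<lambda>k. (-4)^k * of_nat ((n+k) choose (2*k))" n "power y"]
      by simp
    also have "\<dots> = (\<Sum>k\<le>n. of_nat ((n+k) choose (2*k)) * (-4*y)^k * (1+y)^(n-k))"
    proof (rule sum.cong[OF refl])
      fix k
      have "(1+y)^(n-k) = (\<Sum>i\<le>n-k. of_nat ((n-k) choose i) * y^i)"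
        using binomial_ring[of y 1 "n-k"] by (simp add: add.commute)
      moreover have "(-4*y)^k = (-4)^k * y^k"
        by (rule power_mult_distrib)
      ultimately show "(-4)^k * of_nat ((n+k) choose (2*k)) * (\<Sum>i\<le>n-k. of_nat ((n-k) choose i) * y^(k+i))
          = of_nat ((n+k) choose (2*k)) * (-4*y)^k * (1+y)^(n-k)"
        by (simp add: power_add sum_distrib_left mult_ac)
    qed
    also have "\<dots> = (\<Sum>j\<le>n. of_nat ((2*n+1) choose (2*j)) * (-y)^j)"
      by (rule choose_polynomial_identity)
    finally show ?thesis
      by (simp only: power_minus[of y] mult_ac)
  qed
  then have "\<forall>i\<le>n. ?c i = (-1)^i * of_nat ((2*n+1) choose (2*i))"
    by (subst polyfun_eq_coeffs[symmetric]) blast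
  then have "?c j = (-1)^j * of_nat ((2*n+1) choose (2*j))"
    using assms by blast
  then have "(of_int (\<Sum>k\<le>j. (-4)^k * int ((n+k) choose (2*k)) * int ((n-k) choose (j-k))) :: complex)
      = of_int ((-1)^j * int ((2*n+1) choose (2*j)))"
    by simp
  then show ?thesis
    by (simp only: of_int_eq_iff)
qed

lemma choose_umbral_identity:
  fixes g :: "nat \<Rightarrow> 'a::comm_ring_1"
  shows "(\<Sum>k\<le>n. (-4)^k * of_nat ((n+k) choose (2*k))
            * (\<Sum>i\<le>n-k. of_nat ((n-k) choose i) * g (k+i)))
       = (\<Sum>j\<le>n. (-1)^j * of_nat ((2*n+1) choose (2*j)) * g j)"
proof -
  have "(\<Sum>k\<le>j. (-4)^k * of_nat ((n+k) choose (2*k)) * of_nat ((n-k) choose (j-k)))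
      = ((-1)^j * of_nat ((2*n+1) choose (2*j)) :: 'a)" if "j \<le> n" for j
    using arg_cong[OF choose_coefficient_identity[OF that], of "of_int :: int \<Rightarrow> 'a"] by simp
  then show ?thesis
    using sum_shifted_binomial_swap[of "\<lambda>k. (-4)^k * of_nat ((n+k) choose (2*k))" n g]
    by simp
qed

lemma pochhammer_choose_identity:
  fixes s d :: "'a::comm_ring_1"
  shows "(\<Sum>k\<le>n. (-4)^k * of_nat ((n+k) choose (2*k))
            * (pochhammer s k * pochhammer (s + d + of_nat k) (n-k)))
       = (\<Sum>k\<le>n. (-1)^(n-k) * of_nat ((2*n+1) choose (2*k+1))
            * (pochhammer s (n-k) * pochhammer d k))"
proof -
  let ?g = "\<lambda>j. pochhammer s j * pochhammer d (n-j)"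
  have vandermonde: "pochhammer s k * pochhammer (s + d + of_nat k) (n-k)
      = (\<Sum>i\<le>n-k. of_nat ((n-k) choose i) * ?g (k+i))" for k
  proof -
    have "pochhammer (s + d + of_nat k) (n-k)
        = (\<Sum>i\<le>n-k. of_nat ((n-k) choose i) * pochhammer (s + of_nat k) i * pochhammer d (n-k-i))"
      using pochhammer_binomial_sum[of "s + of_nat k" d "n-k"] by (simp add: algebra_simps)
    then show ?thesis
      by (simp add: sum_distrib_left pochhammer_product' mult_ac diff_diff_add)
  qed
  have "(\<Sum>k\<le>n. (-4)^k * of_nat ((n+k) choose (2*k))
            * (pochhammer s k * pochhammer (s + d + of_nat k) (n-k)))
      = (\<Sum>j\<le>n. (-1)^j * of_nat ((2*n+1) choose (2*j)) * ?g j)"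
    unfolding vandermonde by (rule choose_umbral_identity)
  also have "\<dots> = (\<Sum>k\<le>n. (-1)^(n-k) * of_nat ((2*n+1) choose (2*(n-k))) * ?g (n-k))"
    using sum.atLeastAtMost_rev[of "\<lambda>j. (-1)^j * of_nat ((2*n+1) choose (2*j)) * ?g j" 0 n]
    by (simp add: atLeast0AtMost)
  also have "\<dots> = (\<Sum>k\<le>n. (-1)^(n-k) * of_nat ((2*n+1) choose (2*k+1))
            * (pochhammer s (n-k) * pochhammer d k))"
  proof (rule sum.cong[OF refl])
    fix k assume "k \<in> {..n}"
    then have "(2*n+1) choose (2*(n-k)) = (2*n+1) choose (2*n+1 - 2*(n-k))"
      by (intro binomial_symmetric) simp
    also have "2*n+1 - 2*(n-k) = 2*k+1"
      using \<open>k \<in> {..n}\<close> by simp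
    finally have "(2*n+1) choose (2*(n-k)) = (2*n+1) choose (2*k+1)" .
    with \<open>k \<in> {..n}\<close> show "(-1)^(n-k) * of_nat ((2*n+1) choose (2*(n-k))) * ?g (n-k)
        = (-1)^(n-k) * of_nat ((2*n+1) choose (2*k+1)) * (pochhammer s (n-k) * pochhammer d k)"
      by simp
  qed
  finally show ?thesis .
qed

lemma Gamma_plus_of_nat:
  assumes "z \<notin> \<int>\<^sub>\<le>\<^sub>0"
  shows "Gamma (z + of_nat k) = pochhammer z k * Gamma z"
  using pochhammer_Gamma[OF assms, of k] assms by (simp add: Gamma_eq_zero_iff)

lemma inverse_cbinom_eq_pochhammer:
  assumes s: "s \<notin> \<int>\<^sub>\<le>\<^sub>0" and r: "r + 1 \<notin> \<int>\<^sub>\<le>\<^sub>0" and d: "r - s + 1 \<notin> \<int>\<^sub>\<le>\<^sub>0"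
    and "j \<le> m"
  shows "1 / ((of_nat j + s) * cbinom (of_nat m + r) (of_nat j + s))
       = Gamma s * Gamma (r - s + 1) / Gamma (r + 1)
         * (pochhammer s j * pochhammer (r - s + 1) (m - j) / pochhammer (r + 1) m)"
proof -
  have "Gamma (of_nat m + r + 1) = pochhammer (r + 1) m * Gamma (r + 1)"
    using Gamma_plus_of_nat[OF r, of m] by (simp add: add_ac)
  moreover have "Gamma (of_nat j + s + 1) = pochhammer s j * (of_nat j + s) * Gamma s"
    using Gamma_plus_of_nat[OF s, of "Suc j"] by (simp add: pochhammer_Suc add_ac)
  moreover have "Gamma (of_nat m + r - (of_nat j + s) + 1)
      = pochhammer (r - s + 1) (m - j) * Gamma (r - s + 1)"
    using Gamma_plus_of_nat[OF d, of "m - j"] \<open>j \<le> m\<close> by (simp add: of_nat_diff algebra_simps)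
  moreover have "Gamma s \<noteq> 0" "Gamma (r + 1) \<noteq> 0" "Gamma (r - s + 1) \<noteq> 0"
    using s r d by (simp_all add: Gamma_eq_zero_iff)
  moreover have "pochhammer s (Suc j) \<noteq> 0" "pochhammer (r + 1) m \<noteq> 0"
      "pochhammer (r - s + 1) (m - j) \<noteq> 0"
    using s r d by (auto dest: pochhammer_eq_0_imp_nonpos_Int)
  then have "pochhammer s j \<noteq> 0" "of_nat j + s \<noteq> 0"
    by (simp_all add: pochhammer_Suc add.commute)
  ultimately show ?thesis
    unfolding cbinom_def by (simp only:) (simp add: divide_simps mult_ac)
qed

lemma inverse_pochhammer_eq:
  fixes z :: "'a::field"
  assumes "pochhammer z n \<noteq> 0" and "k \<le> n"
  shows "1 / pochhammer z k = pochhammer (z + of_nat k) (n - k) / pochhammer z n"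
  using assms pochhammer_product'[of z k "n - k"] by (auto simp: field_simps)

lemma neg_ints_iff_plus_one_nonpos_Ints: "x \<in> neg_ints \<longleftrightarrow> x + 1 \<in> \<int>\<^sub>\<le>\<^sub>0"
proof
  assume "x \<in> neg_ints"
  then obtain m :: int where "x = of_int m" "m < 0" by (auto simp: neg_ints_def)
  then show "x + 1 \<in> \<int>\<^sub>\<le>\<^sub>0"
    using nonpos_Ints_of_int[of "m + 1"] by simp
next
  assume "x + 1 \<in> \<int>\<^sub>\<le>\<^sub>0"
  then obtain m :: int where "x + 1 = of_int m" "m \<le> 0" by (auto elim!: nonpos_Ints_cases)
  then have "x = of_int (m - 1)" by (simp add: algebra_simps)
  with \<open>m \<le> 0\<close> show "x \<in> neg_ints" by (auto simp: neg_ints_def intro!: exI[of _ "m - 1"])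
qed

lemma nonpos_Ints_iff_zero_or_neg_ints: "x \<in> \<int>\<^sub>\<le>\<^sub>0 \<longleftrightarrow> x = 0 \<or> x \<in> neg_ints"
  by (auto simp: neg_ints_def nonpos_Ints_def dest: order.not_eq_order_implies_strict)

theorem theorem26:
  fixes n :: nat and r s :: complex
  assumes "r \<notin> neg_ints" and "s \<notin> neg_ints" and "s \<noteq> 0" and "r - s \<notin> neg_ints"
  shows "(\<Sum>k=0..n. (-1)^k * 2^(2*k) * of_nat ((n+k) choose (n-k))
            / ((of_nat k + s) * cbinom (of_nat k + r) (of_nat k + s)))
       = (\<Sum>k=0..n. (-1)^(n-k) * of_nat ((2*n+1) choose (2*k+1))
            / ((of_nat (n-k) + s) * cbinom (of_nat n + r) (of_nat (n-k) + s)))"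
proof -
  have s: "s \<notin> \<int>\<^sub>\<le>\<^sub>0"
    using assms(2,3) by (simp add: nonpos_Ints_iff_zero_or_neg_ints)
  have r: "r + 1 \<notin> \<int>\<^sub>\<le>\<^sub>0" and d: "r - s + 1 \<notin> \<int>\<^sub>\<le>\<^sub>0"
    using assms(1,4) by (simp_all flip: neg_ints_iff_plus_one_nonpos_Ints)
  define K where "K = Gamma s * Gamma (r - s + 1) / Gamma (r + 1) / pochhammer (r + 1) n"
  have lhs_term: "(-1)^k * 2^(2*k) * of_nat ((n+k) choose (n-k))
        / ((of_nat k + s) * cbinom (of_nat k + r) (of_nat k + s))
      = K * ((-4)^k * of_nat ((n+k) choose (2*k))
        * (pochhammer s k * pochhammer (s + (r - s + 1) + of_nat k) (n-k)))" if "k \<in> {..n}" for k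
  proof -
    have "(n+k) choose (n-k) = (n+k) choose (2*k)"
      using binomial_symmetric[of "n-k" "n+k"] that by (simp add: mult_2)
    moreover have "(-1)^k * 2^(2*k) = ((-4)::complex)^k"
      by (simp add: power_mult flip: power_mult_distrib)
    moreover have "pochhammer (r + 1) n \<noteq> 0"
      using r by (auto dest: pochhammer_eq_0_imp_nonpos_Int)
    ultimately show ?thesis
      using inverse_cbinom_eq_pochhammer[OF s r d order.refl, of k]
        inverse_pochhammer_eq[of "r + 1" n k] that
      unfolding K_def by (simp add: divide_inverse mult_ac)
  qed
  have rhs_term: "(-1)^(n-k) * of_nat ((2*n+1) choose (2*k+1))
        / ((of_nat (n-k) + s) * cbinom (of_nat n + r) (of_nat (n-k) + s))
      = K * ((-1)^(n-k) * of_nat ((2*n+1) choose (2*k+1))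
        * (pochhammer s (n-k) * pochhammer (r - s + 1) k))" if "k \<in> {..n}" for k
    using inverse_cbinom_eq_pochhammer[OF s r d, of "n-k" n] that
    unfolding K_def by (simp add: divide_inverse mult_ac)
  show ?thesis
    using pochhammer_choose_identity[of n s "r - s + 1"]
    by (simp only: atLeast0AtMost lhs_term rhs_term cong: sum.cong flip: sum_distrib_left)
qed

end
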